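(* Let $\alpha=\ln2/\ln3$ and $t_i=\dfrac{2^{\lfloor (i-1)/\alpha\rfloor}}{3^i}$ for $i\ge1$. Then $$\lim_{m\to\infty}\frac1m\sum_{i=1}^m t_i=\frac1\alpha\int_1^{1+\alpha}3^{-x}\,dx=\frac{1}{6\ln2}.$$
   Context: The numbers $t_i$ are the terms of the (divergent) series $-\Phi_{\mathbb{R}}(1c_\alpha)$, where $1c_\alpha=(\lceil(j+1)\alpha\rceil-\lceil j\alpha\rceil)_{j\ge0}$ and $\Phi_{\mathbb{R}}(w)=-\sum_{i\ge0}2^{d_i}/3^{i+1}$ for a word with $1$'s at positions $d_0<d_1<\cdots$. *)

theory Defs
  imports "HOL-Analysis.Analysis"
begin

definition alpha :: real where
  "alpha = ln 2 / ln 3"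

text \<open>t i = 2^(floor((i-1)/alpha)) / 3^i, for i >= 1. The floor is nonnegative for i >= 1.\<close>
definition t :: "nat \<Rightarrow> real" where
  "t i = 2 ^ nat \<lfloor>(real i - 1) / alpha\<rfloor> / 3 ^ i"

end

theory Submission
  imports Defs "HOL-Real_Asymp.Real_Asymp"
begin

(* With \<beta> = ln 3 / ln 2 = 1 / alpha one has t (j + 1) = 2 powr (- frac (j \<beta>)) / 3, so the
   averages of t are a third of the averages of x \<mapsto> 2 powr (- frac x) along the orbit j \<beta>.
   Since \<beta> is irrational, Dirichlet's theorem gives arbitrarily large q with p coprime to q and
   |q \<beta> - p| < 1/q. Then q consecutive orbit points hit, modulo 1 and up to a common shift below
   1/q, each grid cell [r/q, (r+1)/q) exactly once, so every block of q terms is within a constant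
   of the Riemann sum of 2 powr (-x) over [0,1], which is q / (2 ln 2) + o(q). Averaging over
   blocks gives the limit 1 / (2 ln 2), and 1 / (6 ln 2) is the value of the integral expression. *)

definition decay_frac :: "real \<Rightarrow> real" where
  "decay_frac x = 2 powr (- frac x)"

lemma decay_frac_add_of_int [simp]: "decay_frac (x + of_int n) = decay_frac x"
  by (simp add: decay_frac_def)

lemma two_powr_neg_le_1: "0 \<le> x \<Longrightarrow> 2 powr (- x :: real) \<le> 1"
  by (simp add: powr_minus_divide ge_one_powr_ge_zero)

lemma decay_frac_pos: "0 < decay_frac x"
  by (simp add: decay_frac_def)

lemma decay_frac_le_1: "decay_frac x \<le> 1"
  by (simp add: decay_frac_def two_powr_neg_le_1)

lemma two_powr_neg_dist_le:
  fixes x y :: real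
  assumes "0 \<le> x" "0 \<le> y"
  shows "\<bar>2 powr (- x) - 2 powr (- y)\<bar> \<le> \<bar>x - y\<bar>"
proof -
  have *: "2 powr (- x) - 2 powr (- y) \<le> y - x" if "0 \<le> x" "x \<le> y" for x y :: real
  proof -
    define d where "d = y - x"
    have "1 - 2 powr (- d) \<le> d * ln 2"
      using exp_ge_add_one_self[of "- d * ln 2"] by (simp add: powr_def)
    also have "\<dots> \<le> d"
      using that ln_2_less_1 by (simp add: d_def mult_left_le)
    finally have "1 - 2 powr (- d) \<le> d" .
    moreover have "0 \<le> 1 - 2 powr (- d)"
      using two_powr_neg_le_1[of d] that by (simp add: d_def)
    moreover have "2 powr (- y) = 2 powr (- x) * 2 powr (- d)"
      by (simp add: d_def flip: powr_add)
    ultimately show ?thesis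
      using two_powr_neg_le_1[OF \<open>0 \<le> x\<close>] mult_right_mono[of "2 powr (- x)" 1 "1 - 2 powr (- d)"]
      by (simp add: d_def algebra_simps)
  qed
  show ?thesis
    using *[of x y] *[of y x] assms by (cases "x \<le> y") (auto simp: abs_if)
qed

lemma ln3_div_ln2_irrational: "ln 3 / ln (2::real) \<notin> \<rat>"
proof
  assume "ln 3 / ln (2::real) \<in> \<rat>"
  then obtain a b where ab: "ln 3 / ln (2::real) = of_int a / of_int b" "b > 0"
    by (meson Rats_cases')
  then have "real_of_int b * ln 3 = real_of_int a * ln 2"
    by (simp add: field_simps)
  moreover from this ab(2) have "a > 0"
    by (smt (verit) ln_gt_zero mult_pos_pos of_int_pos zero_less_mult_iff of_int_0_less_iff)
  ultimately have "ln ((3::real) ^ nat b) = ln ((2::real) ^ nat a)"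
    using ab(2) by (simp add: ln_realpow)
  then have "(3::nat) ^ nat b = 2 ^ nat a"
    by (metis ln_inj_iff of_nat_eq_of_nat_power_cancel_iff of_nat_numeral zero_less_numeral zero_less_power)
  then have "even ((3::nat) ^ nat b)"
    using \<open>a > 0\<close> by simp
  then show False
    by simp
qed

lemma t_Suc: "t (Suc j) = decay_frac (real j * (ln 3 / ln 2)) / 3"
proof -
  define y where "y = real j * (ln 3 / ln 2)"
  have "y \<ge> 0"
    by (simp add: y_def)
  have "(2::real) powr y = 3 ^ j"
    by (simp add: y_def powr_def exp_of_nat_mult)
  then have "(2::real) ^ nat \<lfloor>y\<rfloor> = 3 ^ j * decay_frac y"
    using \<open>y \<ge> 0\<close>
    by (simp add: decay_frac_def frac_def powr_diff powr_minus divide_inverse flip: powr_realpow)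
  moreover have "(real (Suc j) - 1) / alpha = y"
    by (simp add: y_def alpha_def)
  ultimately show ?thesis
    by (simp add: t_def y_def)
qed

lemma decay_frac_near_grid_point:
  fixes q r :: nat and b e :: real
  assumes "r < q" "0 \<le> b" "b < 1 / q" "\<bar>e\<bar> < 1 / q"
  shows "\<bar>decay_frac (b + r / q + e) - 2 powr (- (b + r / q))\<bar>
           \<le> 1 / q + (if r = 0 then 1 else 0) + (if r = q - 1 then 1 else 0)"
proof (cases "r = 0 \<or> r = q - 1")
  case True
  have "2 powr (- (b + r / q)) \<le> 1"
    using assms by (intro two_powr_neg_le_1) simp
  then have "\<bar>decay_frac (b + r / q + e) - 2 powr (- (b + r / q))\<bar> \<le> 1"
    using decay_frac_pos[of "b + r / q + e"] decay_frac_le_1[of "b + r / q + e"]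
      powr_gt_zero[of 2 "- (b + r / q)"]
    unfolding abs_le_iff by linarith
  moreover have "1 \<le> 1 / q + (if r = 0 then 1 else 0) + (if r = q - 1 then 1 else (0::real))"
    using True by (auto simp del: One_nat_def)
  ultimately show ?thesis
    by linarith
next
  case False
  then have "1 \<le> r" "real r + 2 \<le> real q"
    using assms(1) by linarith+
  then have "1 / q \<le> r / q" "r / q + 2 / q \<le> 1"
    using assms(1) by (simp_all add: divide_right_mono flip: add_divide_distrib)
  then have "0 < b + r / q + e" "b + r / q + e < 1"
    using assms(2-4) by (simp_all add: abs_less_iff)
  then have "decay_frac (b + r / q + e) = 2 powr (- (b + r / q + e))"
    by (simp add: decay_frac_def frac_eq)
  then have "\<bar>decay_frac (b + r / q + e) - 2 powr (- (b + r / q))\<bar> \<le> \<bar>e\<bar>"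
    using two_powr_neg_dist_le[of "b + r / q + e" "b + r / q"] \<open>0 < b + r / q + e\<close> assms(2)
    by simp
  with assms(4) False show ?thesis
    by simp
qed

lemma bij_betw_mod_affine:
  fixes n p :: int and q :: nat
  assumes "coprime p (int q)"
  shows "bij_betw (\<lambda>k. nat ((n + int k * p) mod int q)) {..<q} {..<q}"
proof -
  let ?g = "\<lambda>k. nat ((n + int k * p) mod int q)"
  have maps: "?g ` {..<q} \<subseteq> {..<q}"
    by (auto simp: nat_less_iff)
  have "inj_on ?g {..<q}"
  proof
    fix k k' assume k: "k \<in> {..<q}" "k' \<in> {..<q}" and "?g k = ?g k'"
    then have "(n + int k * p) mod int q = (n + int k' * p) mod int q"
      by (simp add: eq_nat_nat_iff)
    then have "int q dvd (n + int k * p) - (n + int k' * p)"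
      by (simp add: mod_eq_dvd_iff)
    then have "int q dvd (int k - int k') * p"
      by (simp add: algebra_simps)
    then have "int q dvd int k - int k'"
      using assms by (simp add: coprime_dvd_mult_left_iff coprime_commute)
    moreover have "\<bar>int k - int k'\<bar> < int q"
      using k by auto
    ultimately show "k = k'"
      using dvd_imp_le_int[of "int k - int k'" "int q"] by linarith
  qed
  with maps show ?thesis
    by (simp add: bij_betw_def endo_inj_surj)
qed

definition grid_sum :: "nat \<Rightarrow> real" where
  "grid_sum q = (\<Sum>r<q. 2 powr (- (real r / q)))"

lemma grid_sum_nonneg: "0 \<le> grid_sum q"
  by (simp add: grid_sum_def sum_nonneg)

lemma grid_sum_le: "grid_sum q \<le> q"
proof -
  have "grid_sum q \<le> (\<Sum>r<q. 1)"
    unfolding grid_sum_def by (intro sum_mono two_powr_neg_le_1) simp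
  then show ?thesis
    by simp
qed

lemma grid_sum_eq:
  assumes "q > 0"
  shows "grid_sum q = (1 / 2) / (1 - 2 powr (- 1 / q))"
proof -
  define x where "x = 2 powr (- 1 / real q)"
  have powers: "2 powr (- (r / q)) = x ^ r" for r :: nat
    by (simp add: x_def powr_powr flip: powr_realpow)
  have "x < 1"
    using assms by (simp add: x_def powr_less_one)
  moreover have "x ^ q = 1 / 2"
    using powers[of q] assms by (simp add: powr_minus)
  ultimately have "grid_sum q = (1 - 1 / 2) / (1 - x)"
    by (simp only: grid_sum_def powers sum_gp_strict) simp
  then show ?thesis
    by (simp add: x_def)
qed

lemma grid_sum_average_tendsto: "(\<lambda>q. grid_sum q / q) \<longlonglongrightarrow> 1 / (2 * ln 2)"
proof -
  have "(\<lambda>q::nat. (1 / 2) / (q * (1 - 2 powr (- 1 / q)))) \<longlonglongrightarrow> inverse (ln 2) / 2"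
    by real_asymp
  moreover have "eventually (\<lambda>q. grid_sum q / q = (1 / 2) / (q * (1 - 2 powr (- 1 / q)))) sequentially"
    using eventually_gt_at_top[of 0] by eventually_elim (simp add: grid_sum_eq)
  ultimately show ?thesis
    by (simp add: tendsto_cong field_simps)
qed

text \<open>The q points \<open>a + k \<theta>\<close>, \<open>k < q\<close>, lie modulo 1 near the grid points \<open>b + r / q\<close>, one
  per \<open>r\<close>, where \<open>b\<close> is the fractional part of \<open>q a\<close> divided by \<open>q\<close>; only the two extreme
  cells can wrap around.\<close>

lemma sum_decay_frac_block:
  fixes \<theta> a :: real and p :: int and q :: nat
  assumes coprime: "coprime p (int q)" and "q > 0" and approx: "\<bar>q * \<theta> - of_int p\<bar> < 1 / q"
  shows "\<bar>(\<Sum>k<q. decay_frac (a + real k * \<theta>)) - grid_sum q\<bar> \<le> 4"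
proof -
  define n where "n = \<lfloor>q * a\<rfloor>"
  define b where "b = frac (q * a) / q"
  define \<delta> where "\<delta> = q * \<theta> - of_int p"
  define g where "g k = nat ((n + int k * p) mod int q)" for k
  define E where "E r = 1 / q + (if r = 0 then 1 else 0) + (if r = q - 1 then 1 else (0::real))"
    for r :: nat
  have b: "0 \<le> b" "b < 1 / q"
    using \<open>q > 0\<close> frac_lt_1[of "q * a"] by (simp_all add: b_def divide_strict_right_mono)
  have reindex: "(\<Sum>k<q. f (g k)) = (\<Sum>r<q. f r)" for f :: "nat \<Rightarrow> real"
    using sum.reindex_bij_betw[OF bij_betw_mod_affine[OF coprime, of n]] by (simp add: g_def)
  have g_less: "g k < q" for k
    using \<open>q > 0\<close> by (simp add: g_def nat_less_iff)
  have shift: "a + k * \<theta> = of_int ((n + int k * p) div int q) + (b + g k / q + k * \<delta> / q)" for k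
  proof -
    define d where "d = (n + int k * p) div int q"
    have "n + int k * p = int q * d + int (g k)"
      using \<open>q > 0\<close> by (simp add: g_def d_def)
    then have nkp: "of_int n + k * of_int p = q * of_int d + real (g k)"
      by (metis of_int_add of_int_mult of_int_of_nat_eq)
    have a_eq: "a = (of_int n + q * b) / q" and \<theta>_eq: "\<theta> = (of_int p + \<delta>) / q"
      using \<open>q > 0\<close> by (simp_all add: n_def b_def \<delta>_def frac_def)
    have "a + k * \<theta> = (of_int n + k * of_int p) / q + b + k * \<delta> / q"
      unfolding a_eq \<theta>_eq using \<open>q > 0\<close> by (simp add: field_simps)
    also have "\<dots> = of_int d + (b + g k / q + k * \<delta> / q)"
      unfolding nkp using \<open>q > 0\<close> by (simp add: field_simps)
    finally show ?thesis
      by (simp add: d_def)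
  qed
  have drift: "\<bar>k * \<delta> / q\<bar> < 1 / q" if "k < q" for k
  proof -
    have "\<bar>k * \<delta> / q\<bar> = k / q * \<bar>\<delta>\<bar>"
      by (simp add: abs_mult)
    also have "\<dots> \<le> 1 * \<bar>\<delta>\<bar>"
      using that by (intro mult_right_mono) auto
    finally have "\<bar>k * \<delta> / q\<bar> \<le> \<bar>\<delta>\<bar>"
      by simp
    with approx show ?thesis
      by (simp add: \<delta>_def)
  qed
  have pointwise: "\<bar>decay_frac (a + real k * \<theta>) - 2 powr (- (b + g k / q))\<bar> \<le> E (g k)"
    if "k < q" for k
  proof -
    have "decay_frac (a + real k * \<theta>) = decay_frac (b + g k / q + k * \<delta> / q)"
      unfolding shift by (metis decay_frac_add_of_int add.commute)
    then show ?thesis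
      using decay_frac_near_grid_point[of "g k" q b "k * \<delta> / q"] b g_less drift that
      by (simp add: E_def)
  qed
  have "\<bar>(\<Sum>k<q. decay_frac (a + real k * \<theta>)) - (\<Sum>k<q. 2 powr (- (b + g k / q)))\<bar>
          = \<bar>\<Sum>k<q. decay_frac (a + real k * \<theta>) - 2 powr (- (b + g k / q))\<bar>"
    by (simp add: sum_subtractf)
  also have "\<dots> \<le> (\<Sum>k<q. E (g k))"
    by (rule order_trans[OF sum_abs sum_mono], rule pointwise) simp
  also have "\<dots> = (\<Sum>r<q. E r)"
    by (rule reindex)
  also have "\<dots> = 3"
    using \<open>q > 0\<close> by (simp add: E_def sum.distrib)
  finally have
    "\<bar>(\<Sum>k<q. decay_frac (a + real k * \<theta>)) - (\<Sum>k<q. 2 powr (- (b + g k / q)))\<bar> \<le> 3" .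
  moreover have "(\<Sum>k<q. 2 powr (- (b + g k / q))) = (\<Sum>r<q. 2 powr (- (b + real r / q)))"
    by (rule reindex)
  moreover have "(\<Sum>r<q. 2 powr (- (b + real r / q))) = 2 powr (- b) * grid_sum q"
    by (simp add: grid_sum_def sum_distrib_left flip: powr_add)
  ultimately have grid:
    "\<bar>(\<Sum>k<q. decay_frac (a + real k * \<theta>)) - 2 powr (- b) * grid_sum q\<bar> \<le> 3"
    by simp
  have "\<bar>2 powr (- b) - 1\<bar> \<le> 1 / q"
    using two_powr_neg_dist_le[of b 0] b by simp
  then have "\<bar>(2 powr (- b) - 1) * grid_sum q\<bar> \<le> 1 / q * q"
    unfolding abs_mult using grid_sum_nonneg grid_sum_le by (intro mult_mono) auto
  with grid \<open>q > 0\<close> show ?thesis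
    by (simp add: algebra_simps)
qed

lemma decay_frac_block_average:
  fixes \<theta> \<epsilon> :: real
  assumes "\<theta> \<notin> \<rat>" "\<epsilon> > 0"
  shows "\<exists>q>0. \<forall>a. \<bar>(\<Sum>k<q. decay_frac (a + real k * \<theta>)) - q / (2 * ln 2)\<bar> \<le> q * \<epsilon>"
proof -
  have "eventually (\<lambda>q. \<bar>grid_sum q / q - 1 / (2 * ln 2)\<bar> < \<epsilon> / 2) sequentially"
    using tendstoD[OF grid_sum_average_tendsto, of "\<epsilon> / 2"] assms(2) by (simp add: dist_real_def)
  moreover have "eventually (\<lambda>q. \<bar>4 / real q\<bar> < \<epsilon> / 2) sequentially"
    using tendstoD[OF lim_const_over_n[where 'a=real, of 4], of "\<epsilon> / 2"] assms(2) by simp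
  moreover note eventually_gt_at_top[of 0]
  ultimately have "eventually (\<lambda>q.
      \<bar>grid_sum q / q - 1 / (2 * ln 2)\<bar> < \<epsilon> / 2 \<and> 4 / q < \<epsilon> / 2 \<and> q > 0) sequentially"
    by eventually_elim auto
  then obtain Q where Q: "\<And>q. q \<ge> Q \<Longrightarrow>
      \<bar>grid_sum q / q - 1 / (2 * ln 2)\<bar> < \<epsilon> / 2 \<and> 4 / q < \<epsilon> / 2 \<and> q > 0"
    by (auto simp: eventually_sequentially)
  have "infinite (approx_set \<theta>)"
    using assms(1) rational_iff_finite_approx_set by blast
  then obtain p k where pk: "(p, k) \<in> approx_set \<theta>" "k > int Q"
    using infinite_approx_set by blast
  define q where "q = nat k"
  with pk have q_Q: "q \<ge> Q" and k_q: "k = int q"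
    by auto
  with Q have riemann: "\<bar>grid_sum q / q - 1 / (2 * ln 2)\<bar> < \<epsilon> / 2"
    and "4 / q < \<epsilon> / 2" and "q > 0"
    by auto
  have "coprime p (int q)" "\<bar>\<theta> - of_int p / q\<bar> < 1 / q\<^sup>2"
    using pk(1) unfolding approx_set_def k_q by auto
  moreover have "\<bar>q * \<theta> - of_int p\<bar> = q * \<bar>\<theta> - of_int p / q\<bar>"
    using \<open>q > 0\<close> by (simp add: abs_mult[symmetric] field_simps)
  ultimately have "\<bar>q * \<theta> - of_int p\<bar> < 1 / q"
    using \<open>q > 0\<close> by (simp add: power2_eq_square field_simps)
  have "\<bar>(\<Sum>k<q. decay_frac (a + real k * \<theta>)) - q / (2 * ln 2)\<bar> \<le> q * \<epsilon>" for a
  proof -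
    have "\<bar>grid_sum q - q / (2 * ln 2)\<bar> = q * \<bar>grid_sum q / q - 1 / (2 * ln 2)\<bar>"
      using \<open>q > 0\<close> by (simp add: abs_mult[symmetric] field_simps)
    also have "\<dots> \<le> q * (\<epsilon> / 2)"
      using riemann by (intro mult_left_mono) auto
    finally have "\<bar>grid_sum q - q / (2 * ln 2)\<bar> \<le> q * (\<epsilon> / 2)" .
    moreover have "4 \<le> q * (\<epsilon> / 2)"
      using \<open>4 / q < \<epsilon> / 2\<close> \<open>q > 0\<close> by (simp add: field_simps)
    ultimately show ?thesis
      using sum_decay_frac_block[OF \<open>coprime p (int q)\<close> \<open>q > 0\<close> \<open>\<bar>q * \<theta> - of_int p\<bar> < 1 / q\<close>, of a]
      unfolding abs_le_iff by linarith
  qed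
  with \<open>q > 0\<close> show ?thesis
    by blast
qed

lemma sum_lessThan_add:
  fixes f :: "nat \<Rightarrow> 'a::comm_monoid_add"
  shows "(\<Sum>k<m + n. f k) = (\<Sum>k<m. f k) + (\<Sum>k<n. f (m + k))"
  by (induction n) (simp_all add: add_ac)

lemma cesaro_tendsto_zero_by_blocks:
  fixes f :: "nat \<Rightarrow> real"
  assumes bounded: "\<And>k. \<bar>f k\<bar> \<le> C"
    and blocks: "\<And>\<epsilon>. \<epsilon> > 0 \<Longrightarrow> \<exists>q>0. \<forall>n. \<bar>\<Sum>k<q. f (n + k)\<bar> \<le> real q * \<epsilon>"
  shows "(\<lambda>m. (\<Sum>k<m. f k) / m) \<longlonglongrightarrow> 0"
proof (rule LIMSEQ_I)
  fix \<epsilon> :: real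
  assume "\<epsilon> > 0"
  then obtain q where "q > 0" and block: "\<And>n. \<bar>\<Sum>k<q. f (n + k)\<bar> \<le> real q * (\<epsilon> / 2)"
    using blocks[of "\<epsilon> / 2"] by auto
  have whole_blocks: "\<bar>\<Sum>k<l * q. f k\<bar> \<le> real (l * q) * (\<epsilon> / 2)" for l
  proof (induction l)
    case (Suc l)
    have "(\<Sum>k<Suc l * q. f k) = (\<Sum>k<l * q. f k) + (\<Sum>k<q. f (l * q + k))"
      by (simp only: mult_Suc add.commute[of q "l * q"] sum_lessThan_add)
    then show ?case
      using Suc.IH block[of "l * q"] by (simp add: algebra_simps)
  qed simp
  have partial_block: "\<bar>\<Sum>k<r. f (n + k)\<bar> \<le> real r * C" for n r
    using order_trans[OF sum_abs sum_mono[of "{..<r}" "\<lambda>k. \<bar>f (n + k)\<bar>" "\<lambda>_. C"]] bounded by simp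
  define M where "M = nat \<lceil>2 * q * C / \<epsilon>\<rceil> + 1"
  show "\<exists>M. \<forall>m\<ge>M. norm ((\<Sum>k<m. f k) / m - 0) < \<epsilon>"
  proof (intro exI allI impI)
    fix m
    assume "M \<le> m"
    then have "m > 0" and "2 * q * C / \<epsilon> < m"
      using real_nat_ceiling_ge[of "2 * q * C / \<epsilon>"] by (auto simp: M_def)
    then have "real q * C < real m * (\<epsilon> / 2)"
      using \<open>\<epsilon> > 0\<close> by (simp add: field_simps)
    define l r where "l = m div q" and "r = m mod q"
    then have m: "m = l * q + r" and "r < q"
      using \<open>q > 0\<close> by simp_all
    have "\<bar>\<Sum>k<m. f k\<bar> \<le> real (l * q) * (\<epsilon> / 2) + real r * C"
      unfolding m sum_lessThan_add using whole_blocks[of l] partial_block[of "l * q" r] by linarith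
    also have "\<dots> \<le> real m * (\<epsilon> / 2) + real q * C"
      using \<open>r < q\<close> \<open>\<epsilon> > 0\<close> bounded[of 0] m by (intro add_mono mult_right_mono) auto
    finally have "\<bar>\<Sum>k<m. f k\<bar> < real m * \<epsilon>"
      using \<open>real q * C < real m * (\<epsilon> / 2)\<close> by linarith
    with \<open>m > 0\<close> show "norm ((\<Sum>k<m. f k) / m - 0) < \<epsilon>"
      by (simp add: divide_less_eq mult.commute)
  qed
qed

lemma decay_frac_orbit_average:
  fixes \<theta> :: real
  assumes "\<theta> \<notin> \<rat>"
  shows "(\<lambda>m. (\<Sum>k<m. decay_frac (real k * \<theta>)) / m) \<longlonglongrightarrow> 1 / (2 * ln 2)"
proof -
  define c :: real where "c = 1 / (2 * ln 2)"
  have "c > 0"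
    by (simp add: c_def)
  have "(\<lambda>m. (\<Sum>k<m. decay_frac (real k * \<theta>) - c) / m) \<longlonglongrightarrow> 0"
  proof (rule cesaro_tendsto_zero_by_blocks)
    show "\<bar>decay_frac (real k * \<theta>) - c\<bar> \<le> 1 + c" for k
      using decay_frac_pos[of "real k * \<theta>"] decay_frac_le_1[of "real k * \<theta>"] \<open>c > 0\<close>
      unfolding abs_le_iff by linarith
    show "\<exists>q>0. \<forall>n. \<bar>\<Sum>k<q. decay_frac (real (n + k) * \<theta>) - c\<bar> \<le> real q * \<epsilon>" if "\<epsilon> > 0" for \<epsilon>
      using decay_frac_block_average[OF assms that]
      by (simp add: sum_subtractf c_def distrib_right) blast
  qed
  then have "(\<lambda>m. (\<Sum>k<m. decay_frac (real k * \<theta>) - c) / m + c) \<longlonglongrightarrow> 0 + c"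
    by (rule tendsto_add) simp
  moreover have "eventually (\<lambda>m. (\<Sum>k<m. decay_frac (real k * \<theta>) - c) / m + c
      = (\<Sum>k<m. decay_frac (real k * \<theta>)) / m) sequentially"
    using eventually_gt_at_top[of 0] by eventually_elim (simp add: sum_subtractf field_simps)
  ultimately show ?thesis
    by (simp add: tendsto_cong c_def)
qed

lemma integral_three_powr_neg:
  "(1 / alpha) * integral {1..1 + alpha} (\<lambda>x. 3 powr (- x)) = 1 / (6 * ln 2)"
proof -
  define F where "F x = - (3 powr (- x)) / ln 3" for x :: real
  have "(F has_real_derivative 3 powr (- x)) (at x)" for x
    unfolding F_def by (auto intro!: derivative_eq_intros simp: powr_minus)
  then have "((\<lambda>x. 3 powr (- x)) has_integral (F (1 + alpha) - F 1)) {1..1 + alpha}"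
    by (intro fundamental_theorem_of_calculus)
       (auto simp: alpha_def has_real_derivative_iff_has_vector_derivative has_vector_derivative_at_within)
  then have "integral {1..1 + alpha} (\<lambda>x. 3 powr (- x)) = F (1 + alpha) - F 1"
    by (rule integral_unique)
  moreover have "3 powr alpha = (2::real)"
    by (simp add: alpha_def powr_def)
  then have "3 powr (1 + alpha) = (6 :: real)"
    by (simp add: powr_add)
  then have "3 powr (- (1 + alpha)) = (1 / 6 :: real)"
    by (simp only: powr_minus) simp
  ultimately have "integral {1..1 + alpha} (\<lambda>x. 3 powr (- x)) = 1 / (6 * ln 3)"
    by (simp add: F_def field_simps)
  then show ?thesis
    by (simp add: alpha_def)
qed

theorem lemma41:
  shows "(\<lambda>m. (\<Sum>i=1..m. t i) / real m) \<longlonglongrightarrow> (1 / alpha) * integral {1..1+alpha} (\<lambda>x. 3 powr (-x))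
         \<and> (1 / alpha) * integral {1..1+alpha} (\<lambda>x. 3 powr (-x)) = 1 / (6 * ln 2)"
proof -
  have "(\<Sum>i=1..m. t i) / real m = ((\<Sum>k<m. decay_frac (real k * (ln 3 / ln 2))) / m) / 3" for m
    by (simp add: sum.atLeast1_atMost_eq t_Suc sum_divide_distrib mult.commute)
  moreover have
    "(\<lambda>m. ((\<Sum>k<m. decay_frac (real k * (ln 3 / ln 2))) / m) / 3) \<longlonglongrightarrow> (1 / (2 * ln 2)) / 3"
    by (intro tendsto_divide decay_frac_orbit_average ln3_div_ln2_irrational tendsto_const) simp
  ultimately have "(\<lambda>m. (\<Sum>i=1..m. t i) / real m) \<longlonglongrightarrow> 1 / (6 * ln 2)"
    by simp
  then show ?thesis
    unfolding integral_three_powr_neg by simp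
qed

end
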